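(* Let $L$ be a finite-dimensional semisimple Leibniz algebra over $\mathbb{C}$, written as $L=(\oplus_{i=1}^m\mathfrak{g}_i)\ltimes(\oplus_{k=1}^n I_k)$, where $\mathfrak{g}_1,\dots,\mathfrak{g}_m$ are simple Lie subalgebras whose direct sum is a subalgebra of $L$ complementary to $I$ and isomorphic to the liezation $\mathfrak{g}_L$, and $I=\oplus_{k=1}^n I_k$ is a decomposition of $I$ into simple $(\oplus_{i=1}^m\mathfrak{g}_i)$-submodules (with respect to the right action $i.g=[i,g]$). Then for all $1\le i\le m$ and $1\le k\le n$, either $[I_k,\mathfrak{g}_i]=I_k$ or $[I_k,\mathfrak{g}_i]=\{0\}$.
   Context: A Leibniz algebra is a vector space $L$ with a bilinear bracket satisfying $[[x,y],z]=[[x,z],y]+[x,[y,z]]$ for all $x,y,z\in L$. The subspace $I=\mathrm{Span}\langle [x,x]\mid x\in L\rangle$ is an ideal with $[L,I]=0$; the quotient $\mathfrak{g}_L=L/I$ is a Lie algebra (the liezation). $L$ is semisimple if $\mathfrak{g}_L$ is a semisimple Lie algebra. In that case $L$ contains a subalgebra isomorphic to $\mathfrak{g}_L$ complementary to $I$, so $L$ admits a decomposition as in the claim; $[I_k,\mathfrak{g}_i]$ denotes the span of brackets $[x,y]$ with $x\in I_k$, $y\in\mathfrak{g}_i$. *)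

theory Defs
  imports Complex_Main
begin

text \<open>A vector space over the complex numbers is given by a scalar multiplication
  sc :: complex => 'a => 'a satisfying the vector space axioms; the algebra L is the
  whole type 'a, and b is the bracket.\<close>

definition leibniz_algebra :: "(complex \<Rightarrow> 'a::ab_group_add \<Rightarrow> 'a) \<Rightarrow> ('a \<Rightarrow> 'a \<Rightarrow> 'a) \<Rightarrow> bool" where
  "leibniz_algebra sc b \<longleftrightarrow> vector_space sc
     \<and> (\<forall>x. Vector_Spaces.linear sc sc (b x)) \<and> (\<forall>y. Vector_Spaces.linear sc sc (\<lambda>x. b x y))
     \<and> (\<forall>x y z. b (b x y) z = b (b x z) y + b x (b y z))"

definition fin_dim :: "(complex \<Rightarrow> 'a::ab_group_add \<Rightarrow> 'a) \<Rightarrow> bool" where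
  "fin_dim sc \<longleftrightarrow> (\<exists>B. finite B \<and> module.span sc B = UNIV)"

definition bracket_span :: "(complex \<Rightarrow> 'a::ab_group_add \<Rightarrow> 'a) \<Rightarrow> ('a \<Rightarrow> 'a \<Rightarrow> 'a) \<Rightarrow> 'a set \<Rightarrow> 'a set \<Rightarrow> 'a set" where
  "bracket_span sc b A B = module.span sc {b x y | x y. x \<in> A \<and> y \<in> B}"

definition leibniz_kernel :: "(complex \<Rightarrow> 'a::ab_group_add \<Rightarrow> 'a) \<Rightarrow> ('a \<Rightarrow> 'a \<Rightarrow> 'a) \<Rightarrow> 'a set" where
  "leibniz_kernel sc b = module.span sc {b x x | x. True}"

definition subalgebra :: "(complex \<Rightarrow> 'a::ab_group_add \<Rightarrow> 'a) \<Rightarrow> ('a \<Rightarrow> 'a \<Rightarrow> 'a) \<Rightarrow> 'a set \<Rightarrow> bool" where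
  "subalgebra sc b S \<longleftrightarrow> module.subspace sc S \<and> (\<forall>x\<in>S. \<forall>y\<in>S. b x y \<in> S)"

definition lie_subalgebra :: "(complex \<Rightarrow> 'a::ab_group_add \<Rightarrow> 'a) \<Rightarrow> ('a \<Rightarrow> 'a \<Rightarrow> 'a) \<Rightarrow> 'a set \<Rightarrow> bool" where
  "lie_subalgebra sc b S \<longleftrightarrow> subalgebra sc b S \<and> (\<forall>x\<in>S. b x x = 0)"

definition ideal_of :: "(complex \<Rightarrow> 'a::ab_group_add \<Rightarrow> 'a) \<Rightarrow> ('a \<Rightarrow> 'a \<Rightarrow> 'a) \<Rightarrow> 'a set \<Rightarrow> 'a set \<Rightarrow> bool" where
  "ideal_of sc b g J \<longleftrightarrow> module.subspace sc J \<and> J \<subseteq> g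
     \<and> (\<forall>x\<in>J. \<forall>y\<in>g. b x y \<in> J \<and> b y x \<in> J)"

definition simple_lie_subalgebra :: "(complex \<Rightarrow> 'a::ab_group_add \<Rightarrow> 'a) \<Rightarrow> ('a \<Rightarrow> 'a \<Rightarrow> 'a) \<Rightarrow> 'a set \<Rightarrow> bool" where
  "simple_lie_subalgebra sc b g \<longleftrightarrow> lie_subalgebra sc b g
     \<and> (\<exists>x\<in>g. \<exists>y\<in>g. b x y \<noteq> 0)
     \<and> (\<forall>J. ideal_of sc b g J \<longrightarrow> J = {0} \<or> J = g)"

definition direct_sum :: "(complex \<Rightarrow> 'a::ab_group_add \<Rightarrow> 'a) \<Rightarrow> ('i \<Rightarrow> 'a set) \<Rightarrow> 'i set \<Rightarrow> 'a set \<Rightarrow> bool" where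
  "direct_sum sc V A W \<longleftrightarrow> (\<forall>i\<in>A. module.subspace sc (V i))
     \<and> W = {(\<Sum>i\<in>A. v i) | v. \<forall>i\<in>A. v i \<in> V i}
     \<and> (\<forall>v. (\<forall>i\<in>A. v i \<in> V i) \<and> (\<Sum>i\<in>A. v i) = 0 \<longrightarrow> (\<forall>i\<in>A. v i = 0))"

definition right_submodule :: "(complex \<Rightarrow> 'a::ab_group_add \<Rightarrow> 'a) \<Rightarrow> ('a \<Rightarrow> 'a \<Rightarrow> 'a) \<Rightarrow> 'a set \<Rightarrow> 'a set \<Rightarrow> bool" where
  "right_submodule sc b S M \<longleftrightarrow> module.subspace sc M \<and> (\<forall>x\<in>M. \<forall>y\<in>S. b x y \<in> M)"

definition simple_right_module :: "(complex \<Rightarrow> 'a::ab_group_add \<Rightarrow> 'a) \<Rightarrow> ('a \<Rightarrow> 'a \<Rightarrow> 'a) \<Rightarrow> 'a set \<Rightarrow> 'a set \<Rightarrow> bool" where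
  "simple_right_module sc b S M \<longleftrightarrow> right_submodule sc b S M \<and> M \<noteq> {0}
     \<and> (\<forall>N. right_submodule sc b S N \<and> N \<subseteq> M \<longrightarrow> N = {0} \<or> N = M)"

end

theory Submission
  imports Defs
begin

text \<open>The span \<open>[I\<^sub>k, \<g>\<^sub>i]\<close> is a right submodule of \<open>I\<^sub>k\<close> for the action of
  \<open>S = \<Oplus>\<^sub>j \<g>\<^sub>j\<close>: for \<open>u \<in> I\<^sub>k\<close>, \<open>y \<in> \<g>\<^sub>i\<close>, \<open>s \<in> S\<close> the Leibniz identity gives
  \<open>[[u,y],s] = [[u,s],y] + [u,[y,s]]\<close>, and \<open>[y,s] \<in> \<g>\<^sub>i\<close> because distinct summands
  \<open>\<g>\<^sub>j\<close> commute. Simplicity of \<open>I\<^sub>k\<close> then leaves only \<open>[I\<^sub>k, \<g>\<^sub>i] = I\<^sub>k\<close> or \<open>0\<close>.\<close>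

lemma leibniz_algebra_module: "leibniz_algebra sc b \<Longrightarrow> module sc"
  unfolding leibniz_algebra_def by (simp add: module_iff_vector_space)

lemma leibniz_algebra_hom_right_arg: "leibniz_algebra sc b \<Longrightarrow> module_hom sc sc (b x)"
  unfolding leibniz_algebra_def by (simp add: linear_iff_module_hom)

lemma leibniz_algebra_hom_left_arg: "leibniz_algebra sc b \<Longrightarrow> module_hom sc sc (\<lambda>x. b x y)"
  unfolding leibniz_algebra_def by (simp add: linear_iff_module_hom)

lemma leibniz_identity: "leibniz_algebra sc b \<Longrightarrow> b (b x y) z = b (b x z) y + b x (b y z)"
  unfolding leibniz_algebra_def by blast

lemma direct_sum_summand_subset:
  assumes "module sc" and "direct_sum sc V A W" and "finite A" and "i \<in> A"
  shows "V i \<subseteq> W"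
proof
  fix x assume x: "x \<in> V i"
  define v where "v = (\<lambda>j. if j = i then x else 0)"
  have "module.subspace sc (V j)" if "j \<in> A" for j
    using assms(2) that unfolding direct_sum_def by blast
  then have "\<forall>j\<in>A. v j \<in> V j"
    using x module.subspace_0[OF assms(1)] unfolding v_def by simp
  moreover have "(\<Sum>j\<in>A. v j) = x"
    using assms(3,4) unfolding v_def by (simp add: sum.delta)
  ultimately show "x \<in> W"
    using assms(2) unfolding direct_sum_def by blast
qed

lemma direct_sum_bracket_in_summand:
  assumes "module sc" and hom: "module_hom sc sc (b y)"
    and sum: "direct_sum sc V A W" and "i \<in> A"
    and closed: "\<forall>z\<in>V i. b y z \<in> V i"
    and commute: "\<forall>j\<in>A - {i}. \<forall>z\<in>V j. b y z = 0"
    and "s \<in> W"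
  shows "b y s \<in> V i"
proof -
  obtain v where v: "\<forall>j\<in>A. v j \<in> V j" and s: "s = (\<Sum>j\<in>A. v j)"
    using sum \<open>s \<in> W\<close> unfolding direct_sum_def by blast
  have subspace: "module.subspace sc (V i)"
    using sum \<open>i \<in> A\<close> unfolding direct_sum_def by blast
  have "b y s = (\<Sum>j\<in>A. b y (v j))"
    unfolding s by (rule module_hom.sum[OF hom])
  also have "\<dots> \<in> V i"
  proof (rule module.subspace_sum[OF \<open>module sc\<close> subspace])
    fix j assume "j \<in> A"
    then show "b y (v j) \<in> V i"
      using v closed commute module.subspace_0[OF \<open>module sc\<close> subspace]
      by (cases "j = i") auto
  qed
  finally show ?thesis .
qed

lemma bracket_span_subset:
  assumes "module sc" and "right_submodule sc b S M" and "T \<subseteq> S"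
  shows "bracket_span sc b M T \<subseteq> M"
proof -
  have "{b x y | x y. x \<in> M \<and> y \<in> T} \<subseteq> M" and "module.subspace sc M"
    using assms(2,3) unfolding right_submodule_def by blast+
  then show ?thesis
    unfolding bracket_span_def by (rule module.span_minimal[OF \<open>module sc\<close>])
qed

lemma right_submodule_bracket_span:
  assumes leib: "leibniz_algebra sc b" and M: "right_submodule sc b S M"
    and T: "\<forall>y\<in>T. \<forall>s\<in>S. b y s \<in> T"
  shows "right_submodule sc b S (bracket_span sc b M T)"
  unfolding right_submodule_def
proof (intro conjI ballI)
  define G where "G = {b u y | u y. u \<in> M \<and> y \<in> T}"
  have md: "module sc"
    using leib by (rule leibniz_algebra_module)
  have span: "bracket_span sc b M T = module.span sc G"
    unfolding bracket_span_def G_def ..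
  show "module.subspace sc (bracket_span sc b M T)"
    unfolding span by (rule module.subspace_span[OF md])
  fix x s assume x: "x \<in> bracket_span sc b M T" and s: "s \<in> S"
  have "G \<subseteq> (\<lambda>x. b x s) -` module.span sc G"
  proof
    fix z assume "z \<in> G"
    then obtain u y where u: "u \<in> M" and y: "y \<in> T" and z: "z = b u y"
      unfolding G_def by blast
    have "b (b u s) y \<in> G" and "b u (b y s) \<in> G"
      using u y s M T unfolding G_def right_submodule_def by blast+
    then have "b (b u s) y + b u (b y s) \<in> module.span sc G"
      by (meson md module.span_add module.span_base)
    then show "z \<in> (\<lambda>x. b x s) -` module.span sc G"
      unfolding z vimage_eq leibniz_identity[OF leib, of u y s] .
  qed
  moreover have "module.subspace sc ((\<lambda>x. b x s) -` module.span sc G)"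
    by (rule module_hom.subspace_vimage[OF leibniz_algebra_hom_left_arg[OF leib]])
      (rule module.subspace_span[OF md])
  ultimately show "b x s \<in> bracket_span sc b M T"
    using x module.span_minimal[OF md] unfolding span by blast
qed

lemma simple_right_module_bracket_span_cases:
  assumes leib: "leibniz_algebra sc b" and M: "simple_right_module sc b S M"
    and "T \<subseteq> S" and "\<forall>y\<in>T. \<forall>s\<in>S. b y s \<in> T"
  shows "bracket_span sc b M T = M \<or> bracket_span sc b M T = {0}"
proof -
  have "right_submodule sc b S M"
    using M unfolding simple_right_module_def by blast
  then have "right_submodule sc b S (bracket_span sc b M T)"
    and "bracket_span sc b M T \<subseteq> M"
    using right_submodule_bracket_span[OF leib _ assms(4)]
      bracket_span_subset[OF leibniz_algebra_module[OF leib] _ assms(3)]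
    by blast+
  then show ?thesis
    using M unfolding simple_right_module_def by blast
qed

theorem proposition3p1:
  fixes sc :: "complex \<Rightarrow> 'a::ab_group_add \<Rightarrow> 'a"
    and b :: "'a \<Rightarrow> 'a \<Rightarrow> 'a"
    and g :: "nat \<Rightarrow> 'a set" and Ik :: "nat \<Rightarrow> 'a set" and S :: "'a set"
    and m n :: nat
  assumes leib: "leibniz_algebra sc b"
    and fd: "fin_dim sc"
    and g_simple: "\<forall>i\<in>{1..m}. simple_lie_subalgebra sc b (g i)"
    and g_comm: "\<forall>i\<in>{1..m}. \<forall>j\<in>{1..m}. i \<noteq> j \<longrightarrow> (\<forall>x\<in>g i. \<forall>y\<in>g j. b x y = 0)"
    and S_sum: "direct_sum sc g {1..m} S"
    and S_sub: "subalgebra sc b S"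
    and S_compl1: "S \<inter> leibniz_kernel sc b = {0}"
    and S_compl2: "\<forall>x. \<exists>s\<in>S. \<exists>t\<in>leibniz_kernel sc b. x = s + t"
    and I_sum: "direct_sum sc Ik {1..n} (leibniz_kernel sc b)"
    and I_simple: "\<forall>k\<in>{1..n}. simple_right_module sc b S (Ik k)"
  shows "\<forall>i\<in>{1..m}. \<forall>k\<in>{1..n}.
           bracket_span sc b (Ik k) (g i) = Ik k \<or> bracket_span sc b (Ik k) (g i) = {0}"
proof (intro ballI)
  fix i k assume i: "i \<in> {1..m}" and k: "k \<in> {1..n}"
  have md: "module sc"
    using leib by (rule leibniz_algebra_module)
  have "g i \<subseteq> S"
    using md S_sum i by (rule direct_sum_summand_subset[OF _ _ finite_atLeastAtMost])
  moreover have "\<forall>y\<in>g i. \<forall>s\<in>S. b y s \<in> g i"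
  proof (intro ballI)
    fix y s assume "y \<in> g i" and "s \<in> S"
    moreover have "\<forall>z\<in>g i. b y z \<in> g i"
      using g_simple i \<open>y \<in> g i\<close>
      unfolding simple_lie_subalgebra_def lie_subalgebra_def subalgebra_def by blast
    ultimately show "b y s \<in> g i"
      using md leibniz_algebra_hom_right_arg[OF leib] S_sum i g_comm
      by (intro direct_sum_bracket_in_summand[of sc b y g "{1..m}" S i]) auto
  qed
  ultimately show "bracket_span sc b (Ik k) (g i) = Ik k \<or> bracket_span sc b (Ik k) (g i) = {0}"
    using I_simple k by (intro simple_right_module_bracket_span_cases[OF leib]) auto
qed

end
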